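(* Let $C=w-w-\dots-w$ be a chain with $m\ge 2$ edges all having the same weight $w>0$. Then $C$ is extremal, i.e. $L_1(C)=L_\emptyset(C)$.
   Context: For a chain $C'=v_1-\dots-v_r$ with $r\ge 2$ edges and positive weights: $L_1(C')=\max\{\sum_{i=1}^r v_ix_i : x\in\mathbb{R}^r,\ x_i^2+x_{i+1}^2\le 1\ \forall\,1\le i\le r-1\}$; the bare length is $L_\emptyset(C')=\sqrt{(\sum_{i\text{ odd}}v_i)^2+(\sum_{i\text{ even}}v_i)^2}$; $C'$ is extremal if $L_1(C')=L_\emptyset(C')$. *)

theory Defs
  imports Complex_Main
begin

text \<open>A chain v_1 - ... - v_r is represented by its weight function v :: nat => real
  (only the values v 1, ..., v r matter) together with r.\<close>

definition L1 :: "(nat \<Rightarrow> real) \<Rightarrow> nat \<Rightarrow> real" where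
  "L1 v r = Sup {(\<Sum>i=1..r. v i * x i) | x :: nat \<Rightarrow> real.
                   \<forall>i. 1 \<le> i \<and> i \<le> r - 1 \<longrightarrow> (x i)\<^sup>2 + (x (i+1))\<^sup>2 \<le> 1}"

definition L_bare :: "(nat \<Rightarrow> real) \<Rightarrow> nat \<Rightarrow> real" where
  "L_bare v r = sqrt ((\<Sum>i\<in>{i\<in>{1..r}. odd i}. v i)\<^sup>2 + (\<Sum>i\<in>{i\<in>{1..r}. even i}. v i)\<^sup>2)"

definition extremal :: "(nat \<Rightarrow> real) \<Rightarrow> nat \<Rightarrow> bool" where
  "extremal v r \<longleftrightarrow> L1 v r = L_bare v r"

end

(*
  Let A and B be the numbers of odd and even positions in 1..m and N = sqrt (A^2 + B^2), so that
  the bare length of the chain is w N. The vector equal to A/N at odd and B/N at even positions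
  is admissible and has sum N. Conversely, the tangent bound x <= N/(2a) x^2 + a/(2N), taken with
  a = A at odd and a = B at even positions, reduces the estimate sum x_i <= N to the linear
  inequality B (sum of x_i^2 at odd i) + A (sum of x_i^2 at even i) <= A B, which is a
  nonnegative combination of the constraints x_i^2 + x_(i+1)^2 <= 1.
*)

theory Submission
  imports Defs
begin

definition odd_indices :: "nat \<Rightarrow> nat set" where
  "odd_indices n = {i \<in> {1..n}. odd i}"

definition even_indices :: "nat \<Rightarrow> nat set" where
  "even_indices n = {i \<in> {1..n}. even i}"

lemma finite_odd_indices [simp]: "finite (odd_indices n)"
  and finite_even_indices [simp]: "finite (even_indices n)"
  by (simp_all add: odd_indices_def even_indices_def)

lemma odd_indices_0 [simp]: "odd_indices 0 = {}"
  and even_indices_0 [simp]: "even_indices 0 = {}"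
  by (auto simp: odd_indices_def even_indices_def)

lemma odd_indices_Suc:
  "odd_indices (Suc n) = (if odd (Suc n) then insert (Suc n) (odd_indices n) else odd_indices n)"
  by (auto simp: odd_indices_def le_Suc_eq)

lemma even_indices_Suc:
  "even_indices (Suc n) = (if even (Suc n) then insert (Suc n) (even_indices n) else even_indices n)"
  by (auto simp: even_indices_def le_Suc_eq)

lemma notin_odd_indices [simp]: "n < i \<Longrightarrow> i \<notin> odd_indices n"
  and notin_even_indices [simp]: "n < i \<Longrightarrow> i \<notin> even_indices n"
  by (simp_all add: odd_indices_def even_indices_def)

lemma card_odd_indices: "card (odd_indices n) = (n + 1) div 2"
  by (induction n) (simp_all add: odd_indices_Suc)

lemma card_even_indices: "card (even_indices n) = n div 2"
  by (induction n) (simp_all add: even_indices_Suc)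

lemma sum_odd_indices_plus_sum_even_indices:
  "sum f (odd_indices n) + sum f (even_indices n) = (\<Sum>i=1..n. f i)"
proof -
  have "sum f ({1..n} \<inter> {i. odd i}) + sum f ({1..n} - {i. odd i}) = (\<Sum>i=1..n. f i)"
    by (simp flip: sum.Int_Diff)
  moreover have "{1..n} \<inter> {i. odd i} = odd_indices n" "{1..n} - {i. odd i} = even_indices n"
    by (auto simp: odd_indices_def even_indices_def)
  ultimately show ?thesis by simp
qed

lemma sum_le_of_adjacent_sums_le_one:
  fixes y :: "nat \<Rightarrow> real"
  assumes "\<And>i. 1 \<le> i \<Longrightarrow> i < 2 * k \<Longrightarrow> y i + y (Suc i) \<le> 1"
  shows "(\<Sum>i=1..2*k. y i) \<le> k"
  using assms
proof (induction k)
  case (Suc k)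
  have "(\<Sum>i=1..2*k. y i) \<le> k"
    using Suc by simp
  moreover have "y (2*k+1) + y (2*k+2) \<le> 1"
    using Suc.prems[of "2*k+1"] by simp
  ultimately show ?case
    by (simp add: eval_nat_numeral)
qed simp

lemma odd_length_weighted_parity_sums_le:
  fixes y :: "nat \<Rightarrow> real"
  assumes "\<And>i. 1 \<le> i \<Longrightarrow> i \<le> 2 * k \<Longrightarrow> y i + y (Suc i) \<le> 1"
  shows "real k * sum y (odd_indices (2*k+1)) + (real k + 1) * sum y (even_indices (2*k+1))
           \<le> real k * (real k + 1)"
  using assms
proof (induction k)
  case 0
  show ?case by (simp add: even_indices_Suc)
next
  case (Suc k)
  define n where "n = 2 * k + 1"
  let ?P = "sum y (odd_indices n)" and ?Q = "sum y (even_indices n)"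
  have "odd n" and len: "2 * Suc k + 1 = Suc (Suc n)"
    by (simp_all add: n_def)
  have IH: "real k * ?P + (real k + 1) * ?Q \<le> real k * (real k + 1)"
    unfolding n_def by (rule Suc.IH) (simp add: Suc.prems)
  have "?P + ?Q = (\<Sum>i=1..2*k. y i) + y n"
    by (simp add: sum_odd_indices_plus_sum_even_indices n_def)
  also have "\<dots> \<le> k + y n"
    using sum_le_of_adjacent_sums_le_one[of k y] Suc.prems by simp
  finally have "?P + ?Q \<le> k + y n" .
  moreover have "y n + y (Suc n) \<le> 1"
    using Suc.prems[of n] by (simp add: n_def)
  moreover have "(real k + 1) * (y (Suc n) + y (Suc (Suc n))) \<le> real k + 1"
    using Suc.prems[of "Suc n"] by (simp add: n_def mult_left_le)
  moreover have "sum y (odd_indices (Suc (Suc n))) = ?P + y (Suc (Suc n))"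
    and "sum y (even_indices (Suc (Suc n))) = ?Q + y (Suc n)"
    using \<open>odd n\<close> by (simp_all add: odd_indices_Suc even_indices_Suc)
  ultimately show ?case
    unfolding len using IH by (simp add: algebra_simps)
qed

lemma weighted_parity_sums_le:
  fixes y :: "nat \<Rightarrow> real"
  assumes "\<And>i. 1 \<le> i \<Longrightarrow> i < n \<Longrightarrow> y i + y (Suc i) \<le> 1"
  shows "real (card (even_indices n)) * sum y (odd_indices n)
           + real (card (odd_indices n)) * sum y (even_indices n)
         \<le> real (card (odd_indices n)) * real (card (even_indices n))"
proof (cases "even n")
  case True
  then obtain k where n: "n = 2 * k" by blast
  have "sum y (odd_indices n) + sum y (even_indices n) \<le> k"
    unfolding sum_odd_indices_plus_sum_even_indices n
    using assms n by (intro sum_le_of_adjacent_sums_le_one) auto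
  then have "real k * (sum y (odd_indices n) + sum y (even_indices n)) \<le> real k * real k"
    by (simp add: mult_left_mono)
  then show ?thesis
    using n by (simp add: card_odd_indices card_even_indices distrib_left)
next
  case False
  then obtain k where n: "n = 2 * k + 1" by (blast elim: oddE)
  have "real k * sum y (odd_indices n) + (real k + 1) * sum y (even_indices n) \<le> real k * (real k + 1)"
    unfolding n by (rule odd_length_weighted_parity_sums_le) (use assms n in auto)
  then show ?thesis
    using n by (simp add: card_odd_indices card_even_indices algebra_simps)
qed

lemma le_tangent_parabola:
  fixes x a c :: real
  assumes "a > 0" and "c > 0"
  shows "x \<le> c / (2 * a) * x\<^sup>2 + a / (2 * c)"
proof -
  have "2 * a * c * x \<le> (c * x)\<^sup>2 + a\<^sup>2"
    using sum_squares_bound[of "c * x" a] by (simp add: algebra_simps)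
  then show ?thesis
    using assms by (simp add: field_simps power2_eq_square)
qed

lemma sum_le_tangent_parabola:
  fixes x :: "'a \<Rightarrow> real" and a c :: real
  assumes "a > 0" and "c > 0"
  shows "sum x S \<le> c / (2 * a) * (\<Sum>i\<in>S. (x i)\<^sup>2) + card S * a / (2 * c)"
proof -
  have "sum x S \<le> (\<Sum>i\<in>S. c / (2 * a) * (x i)\<^sup>2 + a / (2 * c))"
    using assms by (intro sum_mono le_tangent_parabola)
  then show ?thesis
    by (simp add: sum.distrib sum_distrib_left)
qed

lemma L_bare_unit:
  "L_bare (\<lambda>_. 1) n = sqrt ((card (odd_indices n))\<^sup>2 + (card (even_indices n))\<^sup>2)"
  by (simp add: L_bare_def odd_indices_def even_indices_def)

lemma L_bare_scale:
  assumes "c \<ge> 0"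
  shows "L_bare (\<lambda>i. c * v i) r = c * L_bare v r"
proof -
  have "(c * a)\<^sup>2 + (c * b)\<^sup>2 = c\<^sup>2 * (a\<^sup>2 + b\<^sup>2)" for a b :: real
    by (simp add: algebra_simps power_mult_distrib)
  then show ?thesis
    using assms by (simp add: L_bare_def real_sqrt_mult flip: sum_distrib_left)
qed

lemma sum_le_L_bare_unit:
  fixes x :: "nat \<Rightarrow> real"
  assumes "2 \<le> n" and adjacent: "\<And>i. 1 \<le> i \<Longrightarrow> i < n \<Longrightarrow> (x i)\<^sup>2 + (x (Suc i))\<^sup>2 \<le> 1"
  shows "(\<Sum>i=1..n. x i) \<le> L_bare (\<lambda>_. 1) n"
proof -
  define A where "A = real (card (odd_indices n))"
  define B where "B = real (card (even_indices n))"
  define N where "N = L_bare (\<lambda>_. 1) n"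
  define P where "P = (\<Sum>i\<in>odd_indices n. (x i)\<^sup>2)"
  define Q where "Q = (\<Sum>i\<in>even_indices n. (x i)\<^sup>2)"
  have "A > 0" "B > 0"
    using assms by (simp_all add: A_def B_def card_odd_indices card_even_indices)
  have "N\<^sup>2 = A\<^sup>2 + B\<^sup>2" "N > 0"
    using \<open>A > 0\<close> by (simp_all add: N_def L_bare_unit add_pos_nonneg flip: A_def B_def)
  have "B * P + A * Q \<le> A * B"
    unfolding A_def B_def P_def Q_def by (rule weighted_parity_sums_le) (rule adjacent)
  have "(\<Sum>i=1..n. x i) = sum x (odd_indices n) + sum x (even_indices n)"
    by (simp add: sum_odd_indices_plus_sum_even_indices)
  also have "\<dots> \<le> (N / (2 * A) * P + A * A / (2 * N)) + (N / (2 * B) * Q + B * B / (2 * N))"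
    unfolding P_def Q_def
    using sum_le_tangent_parabola[OF \<open>A > 0\<close> \<open>N > 0\<close>, of x "odd_indices n"]
          sum_le_tangent_parabola[OF \<open>B > 0\<close> \<open>N > 0\<close>, of x "even_indices n"]
    by (simp add: A_def B_def)
  also have "\<dots> = N / (2 * A * B) * (B * P + A * Q) + (A\<^sup>2 + B\<^sup>2) / (2 * N)"
    using \<open>A > 0\<close> \<open>B > 0\<close> \<open>N > 0\<close> by (simp add: field_simps power2_eq_square)
  also have "\<dots> \<le> N / (2 * A * B) * (A * B) + (A\<^sup>2 + B\<^sup>2) / (2 * N)"
    using \<open>B * P + A * Q \<le> A * B\<close> \<open>A > 0\<close> \<open>B > 0\<close> \<open>N > 0\<close>
    by (intro add_right_mono mult_left_mono) auto
  also have "\<dots> = N"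
    using \<open>A > 0\<close> \<open>B > 0\<close> \<open>N > 0\<close>
    unfolding \<open>N\<^sup>2 = A\<^sup>2 + B\<^sup>2\<close>[symmetric] by (simp add: power2_eq_square)
  finally show ?thesis
    unfolding N_def .
qed

lemma L_bare_unit_attained:
  obtains x :: "nat \<Rightarrow> real"
  where "\<And>i. (x i)\<^sup>2 + (x (Suc i))\<^sup>2 \<le> 1" and "(\<Sum>i=1..n. x i) = L_bare (\<lambda>_. 1) n"
proof -
  define A where "A = real (card (odd_indices n))"
  define B where "B = real (card (even_indices n))"
  define N where "N = L_bare (\<lambda>_. 1) n"
  have N: "N\<^sup>2 = A\<^sup>2 + B\<^sup>2"
    by (simp add: N_def L_bare_unit flip: A_def B_def)
  define x :: "nat \<Rightarrow> real" where "x i = (if odd i then A / N else B / N)" for i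
  have "(A / N)\<^sup>2 + (B / N)\<^sup>2 \<le> 1"
    using N by (cases "N = 0") (simp_all add: power_divide flip: add_divide_distrib)
  then have "(x i)\<^sup>2 + (x (Suc i))\<^sup>2 \<le> 1" for i
    by (auto simp: x_def)
  moreover have "(\<Sum>i=1..n. x i) = N"
  proof -
    have "sum x (odd_indices n) = A * (A / N)" "sum x (even_indices n) = B * (B / N)"
      by (simp_all add: x_def odd_indices_def even_indices_def A_def B_def)
    then have "(\<Sum>i=1..n. x i) = (A\<^sup>2 + B\<^sup>2) / N"
      unfolding sum_odd_indices_plus_sum_even_indices[symmetric]
      by (simp add: power2_eq_square add_divide_distrib)
    then show ?thesis
      unfolding N[symmetric] by (simp add: power2_eq_square)
  qed
  ultimately show ?thesis
    using that unfolding N_def by blast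
qed

lemma L1_eqI:
  assumes "\<And>i. 1 \<le> i \<Longrightarrow> i < r \<Longrightarrow> (x i)\<^sup>2 + (x (Suc i))\<^sup>2 \<le> 1"
    and "(\<Sum>i=1..r. v i * x i) = c"
    and "\<And>x. (\<And>i. 1 \<le> i \<Longrightarrow> i < r \<Longrightarrow> (x i)\<^sup>2 + (x (Suc i))\<^sup>2 \<le> 1) \<Longrightarrow> (\<Sum>i=1..r. v i * x i) \<le> c"
  shows "L1 v r = c"
  unfolding L1_def
proof (rule cSup_eq_maximum)
  show "c \<in> {\<Sum>i=1..r. v i * x i | x. \<forall>i. 1 \<le> i \<and> i \<le> r - 1 \<longrightarrow> (x i)\<^sup>2 + (x (i + 1))\<^sup>2 \<le> 1}"
    using assms(1,2) by force
next
  fix z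
  assume "z \<in> {\<Sum>i=1..r. v i * x i | x. \<forall>i. 1 \<le> i \<and> i \<le> r - 1 \<longrightarrow> (x i)\<^sup>2 + (x (i + 1))\<^sup>2 \<le> 1}"
  then show "z \<le> c"
    using assms(3) by force
qed

theorem mainTheorem11:
  fixes w :: real and m :: nat
  assumes "m \<ge> 2" and "w > 0"
  shows "extremal (\<lambda>_. w) m"
proof -
  obtain x :: "nat \<Rightarrow> real" where "\<And>i. (x i)\<^sup>2 + (x (Suc i))\<^sup>2 \<le> 1"
    and "(\<Sum>i=1..m. x i) = L_bare (\<lambda>_. 1) m"
    using L_bare_unit_attained[of m] by blast
  then have "L1 (\<lambda>_. w) m = w * L_bare (\<lambda>_. 1) m"
    using sum_le_L_bare_unit[OF \<open>m \<ge> 2\<close>] \<open>w > 0\<close>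
    by (intro L1_eqI[of m x]) (simp_all flip: sum_distrib_left)
  also have "\<dots> = L_bare (\<lambda>_. w) m"
    using L_bare_scale[of w "\<lambda>_. 1" m] \<open>w > 0\<close> by simp
  finally show ?thesis
    unfolding extremal_def .
qed

end
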